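(* Consider a downlink system with $M\ge1$ single-antenna access points (APs) $\mathscr{A}=\{1,\dots,M\}$ and $N\ge1$ single-antenna devices $\mathscr{D}=\{1,\dots,N\}$, each device requiring an independent $B$-bit message within a time cycle of duration $T$ over bandwidth $W$. Every AP–device link $(i,j)$ has instantaneous received SNR $g_{ij}=\rho|h_{ij}|^2$ with i.i.d. fades $h_{ij}\sim\mathcal{CN}(0,1)$ constant over the cycle and common average SNR $\rho=P_t/(W\sigma_0)$ ($P_t$ transmit power, $\sigma_0$ noise power spectral density). With perfect channel knowledge at the controller, all $N$ devices are scheduled in a single-hop rate-adaptive phase: the APs jointly transmit to each device $j$, one after another (TDMA), at rate $\mathcal{R}_j=W\log_2\!\big(1+\sum_{i\in\mathscr{A}}g_{ij}\big)$, and the system is in outage if $\sum_{j\in\mathscr{D}} B/\mathcal{R}_j > T$. Then, with $B,T,W,\sigma_0,M,N$ fixed (zero multiplexing gain), the diversity order $d_{\text{single-hop}}(0)=-\lim_{P_t\to\infty}\frac{\log\mathbb{P}_{\mathrm{out}}}{\log P_t}$ equals $M$.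
   Context: $\mathbb{P}_{\mathrm{out}}$ is the system outage probability, i.e. the probability over the fading that at least one device fails to receive its message within the cycle, which here equals $\Pr\big(\sum_{j\in\mathscr{D}} B/\mathcal{R}_j > T\big)$. *)

theory Defs
  imports "HOL-Probability.Probability"
begin

text \<open>Fading model: h i j, for APs i in {1..M} and devices j in {1..N}, are i.i.d.
  circularly-symmetric standard complex Gaussians CN(0,1), i.e. all real and imaginary
  parts are mutually independent real Gaussians with mean 0 and variance 1/2.\<close>

definition iid_CN01_fading ::
  "'w measure \<Rightarrow> (nat \<Rightarrow> nat \<Rightarrow> 'w \<Rightarrow> complex) \<Rightarrow> nat \<Rightarrow> nat \<Rightarrow> bool" where
  "iid_CN01_fading P h M N \<longleftrightarrow>
     prob_space P \<and>
     (\<forall>i\<in>{1..M}. \<forall>j\<in>{1..N}.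
        distributed P lborel (\<lambda>\<omega>. Re (h i j \<omega>)) (\<lambda>x. ennreal (normal_density 0 (sqrt (1/2)) x)) \<and>
        distributed P lborel (\<lambda>\<omega>. Im (h i j \<omega>)) (\<lambda>x. ennreal (normal_density 0 (sqrt (1/2)) x))) \<and>
     prob_space.indep_vars P (\<lambda>_. borel)
        (\<lambda>(i, j, b) \<omega>. if b then Re (h i j \<omega>) else Im (h i j \<omega>))
        ({1..M} \<times> {1..N} \<times> (UNIV :: bool set))"

definition avg_snr :: "real \<Rightarrow> real \<Rightarrow> real \<Rightarrow> real" where
  "avg_snr Pt W sigma0 = Pt / (W * sigma0)"

definition single_hop_rate ::
  "(nat \<Rightarrow> nat \<Rightarrow> 'w \<Rightarrow> complex) \<Rightarrow> nat \<Rightarrow> real \<Rightarrow> real \<Rightarrow> real \<Rightarrow> nat \<Rightarrow> 'w \<Rightarrow> real" where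
  "single_hop_rate h M W sigma0 Pt j \<omega> =
     W * log 2 (1 + (\<Sum>i\<in>{1..M}. avg_snr Pt W sigma0 * (cmod (h i j \<omega>))\<^sup>2))"

definition single_hop_outage ::
  "'w measure \<Rightarrow> (nat \<Rightarrow> nat \<Rightarrow> 'w \<Rightarrow> complex) \<Rightarrow> nat \<Rightarrow> nat \<Rightarrow> real \<Rightarrow> real \<Rightarrow> real \<Rightarrow> real \<Rightarrow> real \<Rightarrow> real" where
  "single_hop_outage P h M N B T W sigma0 Pt =
     measure P {\<omega> \<in> space P. (\<Sum>j\<in>{1..N}. B / single_hop_rate h M W sigma0 Pt j \<omega>) > T}"

end

theory Submission
  imports Defs
begin

text \<open>The outage probability is squeezed between two constant multiples of \<open>Pt ^ -M\<close>.
  Write \<open>\<rho>\<close> for the average SNR. If all \<open>2M\<close> real Gaussian components of the channels of one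
  device lie within distance \<open>a \<sim> \<rho> ^ (-1/2)\<close> of the origin, that device alone needs more than
  the whole cycle; by independence, and since the \<open>N(0, 1/2)\<close> density is bounded above and away
  from zero near the origin, such an event has probability of order \<open>a ^ 2M \<sim> \<rho> ^ -M\<close>.
  Conversely, in outage some device has rate below \<open>N B / T\<close>, which confines all components of
  its channel to such a neighbourhood, and the union bound over the \<open>N\<close> devices gives the
  matching upper bound.\<close>

definition normal_var_half :: "real measure" where
  "normal_var_half = density lborel (\<lambda>x. ennreal (normal_density 0 (sqrt (1/2)) x))"

lemma normal_density_var_half: "normal_density 0 (sqrt (1/2)) x = exp (- x\<^sup>2) / sqrt pi"
  by (simp add: normal_density_def)

interpretation normal_var_half: prob_space normal_var_half
  unfolding normal_var_half_def by (rule prob_space_normal_density) simp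

lemma emeasure_density_le_const:
  assumes "f \<in> borel_measurable M" "A \<in> sets M" "\<And>x. x \<in> A \<Longrightarrow> f x \<le> c"
  shows "emeasure (density M f) A \<le> c * emeasure M A"
proof -
  have "emeasure (density M f) A = (\<integral>\<^sup>+x. f x * indicator A x \<partial>M)"
    using assms(1,2) by (rule emeasure_density)
  also have "\<dots> \<le> (\<integral>\<^sup>+x. c * indicator A x \<partial>M)"
    using assms(3) by (intro nn_integral_mono) (simp add: indicator_def)
  also have "\<dots> = c * emeasure M A"
    using assms(2) by (rule nn_integral_cmult_indicator)
  finally show ?thesis .
qed

lemma emeasure_density_ge_const:
  assumes "f \<in> borel_measurable M" "A \<in> sets M" "\<And>x. x \<in> A \<Longrightarrow> c \<le> f x"
  shows "c * emeasure M A \<le> emeasure (density M f) A"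
proof -
  have "c * emeasure M A = (\<integral>\<^sup>+x. c * indicator A x \<partial>M)"
    using assms(2) by (rule nn_integral_cmult_indicator[symmetric])
  also have "\<dots> \<le> (\<integral>\<^sup>+x. f x * indicator A x \<partial>M)"
    using assms(3) by (intro nn_integral_mono) (simp add: indicator_def)
  also have "\<dots> = emeasure (density M f) A"
    using assms(1,2) by (rule emeasure_density[symmetric])
  finally show ?thesis .
qed

lemma measure_normal_var_half_centered_le:
  assumes "a \<ge> 0"
  shows "measure normal_var_half {-a<..<a} \<le> 2 * a / sqrt pi"
proof -
  have "emeasure normal_var_half {-a<..<a} \<le> ennreal (1 / sqrt pi) * emeasure lborel {-a<..<a}"
    unfolding normal_var_half_def
    by (rule emeasure_density_le_const) (auto simp: normal_density_var_half divide_right_mono)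
  also have "\<dots> = ennreal (2 * a / sqrt pi)"
    using assms by (simp add: ennreal_mult'[symmetric])
  finally show ?thesis
    using assms by (simp add: normal_var_half.emeasure_eq_measure)
qed

lemma measure_normal_var_half_ge:
  assumes "0 \<le> a" "a \<le> 1"
  shows "exp (-1) / sqrt pi * a \<le> measure normal_var_half {0<..<a}"
proof -
  have "exp (-1) \<le> exp (- x\<^sup>2)" if "x \<in> {0<..<a}" for x
    using that assms power_le_one[of x 2] by simp
  then have "ennreal (exp (-1) / sqrt pi) * emeasure lborel {0<..<a} \<le> emeasure normal_var_half {0<..<a}"
    unfolding normal_var_half_def
    by (intro emeasure_density_ge_const) (auto simp: normal_density_var_half divide_right_mono)
  then show ?thesis
    using assms
    by (simp add: normal_var_half.emeasure_eq_measure ennreal_mult'[symmetric])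
qed

definition fading_part :: "(nat \<Rightarrow> nat \<Rightarrow> 'w \<Rightarrow> complex) \<Rightarrow> nat \<times> nat \<times> bool \<Rightarrow> 'w \<Rightarrow> real" where
  "fading_part h = (\<lambda>(i, j, b) \<omega>. if b then Re (h i j \<omega>) else Im (h i j \<omega>))"

lemma all_fading_parts_in_iff:
  "(\<forall>b. fading_part h (i, j, b) \<omega> \<in> A) \<longleftrightarrow> Re (h i j \<omega>) \<in> A \<and> Im (h i j \<omega>) \<in> A"
  unfolding all_bool_eq by (simp add: fading_part_def)

lemma iid_CN01_fading_indep_parts:
  "iid_CN01_fading P h M N \<Longrightarrow>
     prob_space.indep_vars P (\<lambda>_. borel) (fading_part h) ({1..M} \<times> {1..N} \<times> UNIV)"
  by (simp add: iid_CN01_fading_def fading_part_def)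

lemma iid_CN01_fading_distributed_part:
  assumes "iid_CN01_fading P h M N" "k \<in> {1..M} \<times> {1..N} \<times> UNIV"
  shows "distributed P lborel (fading_part h k) (\<lambda>x. ennreal (normal_density 0 (sqrt (1/2)) x))"
proof -
  obtain i j b where k: "k = (i, j, b)" "i \<in> {1..M}" "j \<in> {1..N}"
    using assms(2) by auto
  then show ?thesis
    using assms(1) by (cases b) (simp_all add: iid_CN01_fading_def fading_part_def)
qed

lemma iid_CN01_fading_measurable:
  assumes "iid_CN01_fading P h M N" "i \<in> {1..M}" "j \<in> {1..N}"
  shows "h i j \<in> borel_measurable P"
proof -
  have "fading_part h (i, j, b) \<in> borel_measurable P" for b
    using distributed_measurable[OF iid_CN01_fading_distributed_part[OF assms(1)]] assms(2,3)
    by simp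
  from this[of True] this[of False] show ?thesis
    by (simp add: borel_measurable_complex_iff fading_part_def)
qed

lemma iid_CN01_fading_prob_part:
  assumes "iid_CN01_fading P h M N" "k \<in> {1..M} \<times> {1..N} \<times> UNIV" "A \<in> sets borel"
  shows "measure P (fading_part h k -` A \<inter> space P) = measure normal_var_half A"
proof -
  note distr = iid_CN01_fading_distributed_part[OF assms(1,2)]
  have "measure P (fading_part h k -` A \<inter> space P) = measure (distr P lborel (fading_part h k)) A"
    using distributed_measurable[OF distr] assms(3) by (simp add: measure_distr)
  then show ?thesis
    by (simp add: distributed_distr_eq_density[OF distr] normal_var_half_def)
qed

lemma iid_CN01_fading_prob_device:
  assumes iid: "iid_CN01_fading P h M N" and "j \<in> {1..N}" "M \<ge> 1" "A \<in> sets borel"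
  shows "measure P {\<omega> \<in> space P. \<forall>i\<in>{1..M}. Re (h i j \<omega>) \<in> A \<and> Im (h i j \<omega>) \<in> A}
           = measure normal_var_half A ^ (2 * M)"
proof -
  interpret prob_space P
    using iid by (simp add: iid_CN01_fading_def)
  define J where "J = {1..M} \<times> {j} \<times> (UNIV :: bool set)"
  have J: "J \<noteq> {}" "finite J" "J \<subseteq> {1..M} \<times> {1..N} \<times> UNIV" "card J = 2 * M"
    using assms(2,3) by (auto simp: J_def card_cartesian_product)
  have "\<omega> \<in> (\<Inter>k\<in>J. fading_part h k -` A \<inter> space P) \<longleftrightarrow>
      \<omega> \<in> space P \<and> (\<forall>i\<in>{1..M}. \<forall>b. fading_part h (i, j, b) \<omega> \<in> A)" for \<omega>
    using J(1) by (auto simp: J_def)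
  then have "{\<omega> \<in> space P. \<forall>i\<in>{1..M}. Re (h i j \<omega>) \<in> A \<and> Im (h i j \<omega>) \<in> A}
          = (\<Inter>k\<in>J. fading_part h k -` A \<inter> space P)"
    unfolding all_fading_parts_in_iff[symmetric] by blast
  also have "prob \<dots> = (\<Prod>k\<in>J. prob (fading_part h k -` A \<inter> space P))"
    using J assms(4) by (intro indep_varsD[OF iid_CN01_fading_indep_parts[OF iid]]) auto
  also have "\<dots> = (\<Prod>k\<in>J. measure normal_var_half A)"
    using J(3) by (intro prod.cong iid_CN01_fading_prob_part[OF iid _ assms(4)]) auto
  finally show ?thesis
    using J(4) by simp
qed

lemma iid_CN01_fading_device_event_measurable:
  assumes "iid_CN01_fading P h M N" "j \<in> {1..N}" "A \<in> sets borel"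
  shows "{\<omega> \<in> space P. \<forall>i\<in>{1..M}. Re (h i j \<omega>) \<in> A \<and> Im (h i j \<omega>) \<in> A} \<in> sets P"
proof -
  have [measurable]: "h i j \<in> borel_measurable P" if "i \<in> {1..M}" for i
    using iid_CN01_fading_measurable[OF assms(1) that assms(2)] .
  show ?thesis
    using assms(3) by measurable
qed

lemma single_hop_rate_Re_Im:
  "single_hop_rate h M W sigma0 Pt j \<omega> =
     W * log 2 (1 + avg_snr Pt W sigma0 * (\<Sum>i\<in>{1..M}. (Re (h i j \<omega>))\<^sup>2 + (Im (h i j \<omega>))\<^sup>2))"
  by (simp add: single_hop_rate_def sum_distrib_left cmod_power2)

lemma single_hop_outage_event_measurable:
  assumes "iid_CN01_fading P h M N"
  shows "{\<omega> \<in> space P. T < (\<Sum>j\<in>{1..N}. B / single_hop_rate h M W sigma0 Pt j \<omega>)} \<in> sets P"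
proof -
  have [measurable]: "h i j \<in> borel_measurable P" if "i \<in> {1..M}" "j \<in> {1..N}" for i j
    using iid_CN01_fading_measurable[OF assms that] .
  show ?thesis
    unfolding single_hop_rate_def by measurable
qed

lemma mult_log2_less_iff:
  fixes W x r :: real
  assumes "W > 0" "x > -1"
  shows "W * log 2 (1 + x) < r \<longleftrightarrow> x < 2 powr (r / W) - 1"
proof -
  have "W * log 2 (1 + x) < r \<longleftrightarrow> log 2 (1 + x) < r / W"
    using assms(1) by (simp add: pos_less_divide_eq mult.commute)
  also have "\<dots> \<longleftrightarrow> 1 + x < 2 powr (r / W)"
    using assms(2) by (intro log_less_iff) auto
  finally show ?thesis
    by linarith
qed

lemma sum_divide_gt_if_small_member:
  fixes R :: "'a \<Rightarrow> real" and B T :: real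
  assumes "finite J" "j \<in> J" "\<forall>k\<in>J. 0 \<le> R k" "0 < R j" "R j < B / T" "B > 0" "T > 0"
  shows "T < (\<Sum>k\<in>J. B / R k)"
proof -
  have "T < B / R j"
    using assms(4,5,7) by (simp add: field_simps)
  also have "\<dots> \<le> (\<Sum>k\<in>J. B / R k)"
    using assms(1-3,6) by (intro member_le_sum) auto
  finally show ?thesis .
qed

lemma sum_divide_le_if_large:
  fixes R :: "'a \<Rightarrow> real" and B T :: real
  assumes "finite J" "\<forall>k\<in>J. card J * B / T \<le> R k" "B > 0" "T > 0"
  shows "(\<Sum>k\<in>J. B / R k) \<le> T"
proof (cases "J = {}")
  case False
  then have card: "card J > 0"
    using assms(1) by (simp add: card_gt_0_iff)
  have "0 < card J * B / T"
    using card assms(3,4) by simp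
  then have "B / R k \<le> B / (card J * B / T)" if "k \<in> J" for k
    using assms(2,3) that by (intro frac_le) auto
  then have "(\<Sum>k\<in>J. B / R k) \<le> card J * (B / (card J * B / T))"
    by (rule sum_bounded_above)
  also have "\<dots> = T"
    using card assms(3) by simp
  finally show ?thesis .
qed (use assms(4) in simp)

lemma sum_Re_Im_sq_bounds:
  fixes z :: "'a \<Rightarrow> complex" and a :: real
  assumes "finite I" "I \<noteq> {}" "\<forall>i\<in>I. Re (z i) \<in> {0<..<a} \<and> Im (z i) \<in> {0<..<a}"
  shows "0 < (\<Sum>i\<in>I. (Re (z i))\<^sup>2 + (Im (z i))\<^sup>2)"
    and "(\<Sum>i\<in>I. (Re (z i))\<^sup>2 + (Im (z i))\<^sup>2) < 2 * card I * a\<^sup>2"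
proof -
  have term_bounds: "0 < (Re (z i))\<^sup>2 + (Im (z i))\<^sup>2" "(Re (z i))\<^sup>2 + (Im (z i))\<^sup>2 < 2 * a\<^sup>2"
    if "i \<in> I" for i
  proof -
    have "0 < Re (z i)" "Re (z i) < a" "0 < Im (z i)" "Im (z i) < a"
      using assms(3) that by auto
    then have "0 < (Re (z i))\<^sup>2" "(Re (z i))\<^sup>2 < a\<^sup>2" "(Im (z i))\<^sup>2 < a\<^sup>2"
      by (simp_all add: power_strict_mono)
    then show "0 < (Re (z i))\<^sup>2 + (Im (z i))\<^sup>2" "(Re (z i))\<^sup>2 + (Im (z i))\<^sup>2 < 2 * a\<^sup>2"
      using zero_le_power2[of "Im (z i)"] by linarith+
  qed
  show "0 < (\<Sum>i\<in>I. (Re (z i))\<^sup>2 + (Im (z i))\<^sup>2)"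
    using assms(1,2) term_bounds(1) by (intro sum_pos) auto
  have "(\<Sum>i\<in>I. (Re (z i))\<^sup>2 + (Im (z i))\<^sup>2) < (\<Sum>i\<in>I. 2 * a\<^sup>2)"
    using assms(1,2) term_bounds(2) by (intro sum_strict_mono) auto
  then show "(\<Sum>i\<in>I. (Re (z i))\<^sup>2 + (Im (z i))\<^sup>2) < 2 * card I * a\<^sup>2"
    by simp
qed

text \<open>The components are taken in \<open>(0, a)\<close> rather than \<open>(-a, a)\<close> so that the rate is nonzero:
  a zero rate would contribute \<open>B / 0 = 0\<close> to the total transmission time.\<close>

lemma single_hop_outage_if_weak_device:
  assumes "M \<ge> 1" "j \<in> {1..N}" "B > 0" "T > 0" "W > 0" "avg_snr Pt W sigma0 > 0"
    and "2 * real M * avg_snr Pt W sigma0 * a\<^sup>2 \<le> 2 powr (B / (T * W)) - 1"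
    and "\<forall>i\<in>{1..M}. Re (h i j \<omega>) \<in> {0<..<a} \<and> Im (h i j \<omega>) \<in> {0<..<a}"
  shows "T < (\<Sum>j\<in>{1..N}. B / single_hop_rate h M W sigma0 Pt j \<omega>)"
proof -
  define \<rho> where "\<rho> = avg_snr Pt W sigma0"
  define S where "S k = (\<Sum>i\<in>{1..M}. (Re (h i k \<omega>))\<^sup>2 + (Im (h i k \<omega>))\<^sup>2)" for k
  have rate: "single_hop_rate h M W sigma0 Pt k \<omega> = W * log 2 (1 + \<rho> * S k)" for k
    by (simp add: single_hop_rate_Re_Im \<rho>_def S_def)
  have S_nonneg: "0 \<le> S k" for k
    unfolding S_def by (intro sum_nonneg) auto
  have S_bounds: "0 < S j" "S j < 2 * real M * a\<^sup>2"
    unfolding S_def using sum_Re_Im_sq_bounds[of "{1..M}" "\<lambda>i. h i j \<omega>" a] assms(1,8) by auto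
  then have "0 < \<rho> * S j"
    using assms(6) by (simp add: \<rho>_def)
  have "\<rho> * S j < \<rho> * (2 * real M * a\<^sup>2)"
    using S_bounds(2) assms(6) by (simp add: \<rho>_def)
  also have "\<dots> \<le> 2 powr (B / T / W) - 1"
    using assms(7) by (simp add: \<rho>_def mult_ac)
  finally have "single_hop_rate h M W sigma0 Pt j \<omega> < B / T"
    using assms(5) \<open>0 < \<rho> * S j\<close> by (simp add: rate mult_log2_less_iff)
  moreover have "0 < single_hop_rate h M W sigma0 Pt j \<omega>"
    using assms(5) \<open>0 < \<rho> * S j\<close> by (simp add: rate)
  moreover have "\<forall>k\<in>{1..N}. 0 \<le> single_hop_rate h M W sigma0 Pt k \<omega>"
  proof
    fix k
    have "0 \<le> \<rho> * S k"
      using assms(6) S_nonneg by (simp add: \<rho>_def)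
    then show "0 \<le> single_hop_rate h M W sigma0 Pt k \<omega>"
      using assms(5) by (simp add: rate)
  qed
  ultimately show ?thesis
    using assms(2-4) by (intro sum_divide_gt_if_small_member) auto
qed

lemma single_hop_rate_ge_if_strong_fade:
  assumes "W > 0" "avg_snr Pt W sigma0 > 0" "a \<ge> 0"
    and "2 powr (r / W) - 1 \<le> avg_snr Pt W sigma0 * a\<^sup>2"
    and "i \<in> {1..M}" "\<not> (Re (h i j \<omega>) \<in> {-a<..<a} \<and> Im (h i j \<omega>) \<in> {-a<..<a})"
  shows "r \<le> single_hop_rate h M W sigma0 Pt j \<omega>"
proof -
  define \<rho> where "\<rho> = avg_snr Pt W sigma0"
  define S where "S = (\<Sum>i\<in>{1..M}. (Re (h i j \<omega>))\<^sup>2 + (Im (h i j \<omega>))\<^sup>2)"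
  have "a \<le> \<bar>Re (h i j \<omega>)\<bar> \<or> a \<le> \<bar>Im (h i j \<omega>)\<bar>"
    using assms(6) by auto
  then have "a\<^sup>2 \<le> (Re (h i j \<omega>))\<^sup>2 + (Im (h i j \<omega>))\<^sup>2"
  proof
    assume "a \<le> \<bar>Re (h i j \<omega>)\<bar>"
    then have "a\<^sup>2 \<le> \<bar>Re (h i j \<omega>)\<bar>\<^sup>2"
      using assms(3) by (rule power_mono)
    then show ?thesis
      using zero_le_power2[of "Im (h i j \<omega>)"] power2_abs[of "Re (h i j \<omega>)"] by linarith
  next
    assume "a \<le> \<bar>Im (h i j \<omega>)\<bar>"
    then have "a\<^sup>2 \<le> \<bar>Im (h i j \<omega>)\<bar>\<^sup>2"
      using assms(3) by (rule power_mono)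
    then show ?thesis
      using zero_le_power2[of "Re (h i j \<omega>)"] power2_abs[of "Im (h i j \<omega>)"] by linarith
  qed
  also have "\<dots> \<le> S"
    unfolding S_def using assms(5) by (intro member_le_sum) auto
  finally have "\<rho> * a\<^sup>2 \<le> \<rho> * S"
    using assms(2) by (simp add: \<rho>_def)
  then have "2 powr (r / W) - 1 \<le> \<rho> * S"
    using assms(4) by (simp add: \<rho>_def)
  moreover have "0 \<le> \<rho> * S"
    unfolding S_def \<rho>_def using assms(2) by (intro mult_nonneg_nonneg sum_nonneg) auto
  ultimately have "\<not> W * log 2 (1 + \<rho> * S) < r"
    using assms(1) mult_log2_less_iff[of W "\<rho> * S" r] by linarith
  then show ?thesis
    by (simp add: single_hop_rate_Re_Im \<rho>_def S_def)
qed

lemma single_hop_outage_imp_weak_device: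
  assumes "B > 0" "T > 0" "W > 0" "avg_snr Pt W sigma0 > 0" "a \<ge> 0"
    and "2 powr (real N * B / (T * W)) - 1 \<le> avg_snr Pt W sigma0 * a\<^sup>2"
    and "T < (\<Sum>j\<in>{1..N}. B / single_hop_rate h M W sigma0 Pt j \<omega>)"
  shows "\<exists>j\<in>{1..N}. \<forall>i\<in>{1..M}. Re (h i j \<omega>) \<in> {-a<..<a} \<and> Im (h i j \<omega>) \<in> {-a<..<a}"
proof (rule ccontr)
  assume no_weak: "\<not> ?thesis"
  have threshold: "2 powr (real N * B / T / W) - 1 \<le> avg_snr Pt W sigma0 * a\<^sup>2"
    using assms(6) by simp
  have "real N * B / T \<le> single_hop_rate h M W sigma0 Pt j \<omega>" if j: "j \<in> {1..N}" for j
  proof -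
    have "\<exists>i\<in>{1..M}. \<not> (Re (h i j \<omega>) \<in> {-a<..<a} \<and> Im (h i j \<omega>) \<in> {-a<..<a})"
      using no_weak j unfolding Set.bex_simps(8) Set.ball_simps(10) by (rule bspec)
    then obtain i where "i \<in> {1..M}" "\<not> (Re (h i j \<omega>) \<in> {-a<..<a} \<and> Im (h i j \<omega>) \<in> {-a<..<a})" ..
    then show ?thesis
      by (rule single_hop_rate_ge_if_strong_fade[OF assms(3-5) threshold])
  qed
  then have "(\<Sum>j\<in>{1..N}. B / single_hop_rate h M W sigma0 Pt j \<omega>) \<le> T"
    using assms(1,2) by (intro sum_divide_le_if_large) auto
  then show False
    using assms(7) by simp
qed

lemma single_hop_outage_ge:
  assumes "M \<ge> 1" "N \<ge> 1" "B > 0" "T > 0" "W > 0" "iid_CN01_fading P h M N"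
    and "avg_snr Pt W sigma0 > 0" "2 powr (B / (T * W)) - 1 \<le> 2 * real M * avg_snr Pt W sigma0"
  shows "(exp (-2) * (2 powr (B / (T * W)) - 1) / (2 * pi * real M * avg_snr Pt W sigma0)) ^ M
           \<le> single_hop_outage P h M N B T W sigma0 Pt"
proof -
  interpret prob_space P
    using assms(6) by (simp add: iid_CN01_fading_def)
  define \<rho> where "\<rho> = avg_snr Pt W sigma0"
  define c where "c = 2 powr (B / (T * W)) - 1"
  define a where "a = sqrt (c / (2 * real M * \<rho>))"
  have "0 < c"
    using gr_one_powr[of 2 "B / (T * W)"] assms(3-5) by (simp add: c_def)
  then have a: "0 \<le> a" "a \<le> 1" "2 * real M * \<rho> * a\<^sup>2 = c"
    using assms(1,7,8) by (auto simp: a_def \<rho>_def c_def)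
  define E where "E = {\<omega> \<in> space P. \<forall>i\<in>{1..M}. Re (h i 1 \<omega>) \<in> {0<..<a} \<and> Im (h i 1 \<omega>) \<in> {0<..<a}}"
  have weak_device_outage: "E \<subseteq> {\<omega> \<in> space P. T < (\<Sum>j\<in>{1..N}. B / single_hop_rate h M W sigma0 Pt j \<omega>)}"
  proof
    fix \<omega> assume "\<omega> \<in> E"
    then have "\<omega> \<in> space P" and weak: "\<forall>i\<in>{1..M}. Re (h i 1 \<omega>) \<in> {0<..<a} \<and> Im (h i 1 \<omega>) \<in> {0<..<a}"
      unfolding E_def by blast+
    have "(1::nat) \<in> {1..N}"
      using assms(2) by simp
    moreover have "2 * real M * avg_snr Pt W sigma0 * a\<^sup>2 \<le> 2 powr (B / (T * W)) - 1"
      using a(3) by (simp add: \<rho>_def c_def)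
    ultimately have "T < (\<Sum>j\<in>{1..N}. B / single_hop_rate h M W sigma0 Pt j \<omega>)"
      using weak by (rule single_hop_outage_if_weak_device[OF assms(1) _ assms(3-5,7)])
    then show "\<omega> \<in> {\<omega> \<in> space P. T < (\<Sum>j\<in>{1..N}. B / single_hop_rate h M W sigma0 Pt j \<omega>)}"
      using \<open>\<omega> \<in> space P\<close> by simp
  qed
  have "(exp (-2) * c / (2 * pi * real M * \<rho>)) ^ M = (exp (-1) / sqrt pi * a) ^ (2 * M)"
  proof -
    have "(exp (-1) / sqrt pi * a)\<^sup>2 = exp (-2) * c / (2 * pi * real M * \<rho>)"
      using a(3) assms(1,7)
      by (auto simp: \<rho>_def power_mult_distrib power_divide exp_double[symmetric] field_simps)
    then show ?thesis
      by (simp add: power_mult)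
  qed
  also have "\<dots> \<le> measure normal_var_half {0<..<a} ^ (2 * M)"
    using a(1,2) by (intro power_mono measure_normal_var_half_ge) auto
  also have "\<dots> = prob E"
    unfolding E_def using assms(2) by (intro iid_CN01_fading_prob_device[OF assms(6) _ assms(1), symmetric]) auto
  also have "\<dots> \<le> single_hop_outage P h M N B T W sigma0 Pt"
    unfolding single_hop_outage_def using weak_device_outage
    by (intro finite_measure_mono single_hop_outage_event_measurable[OF assms(6)])
  finally show ?thesis
    by (simp add: \<rho>_def c_def)
qed

lemma single_hop_outage_le:
  assumes "M \<ge> 1" "B > 0" "T > 0" "W > 0" "iid_CN01_fading P h M N" "avg_snr Pt W sigma0 > 0"
  shows "single_hop_outage P h M N B T W sigma0 Pt
           \<le> N * (4 * (2 powr (real N * B / (T * W)) - 1) / (pi * avg_snr Pt W sigma0)) ^ M"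
proof -
  interpret prob_space P
    using assms(5) by (simp add: iid_CN01_fading_def)
  define \<rho> where "\<rho> = avg_snr Pt W sigma0"
  define c where "c = 2 powr (real N * B / (T * W)) - 1"
  define a where "a = sqrt (c / \<rho>)"
  have "0 \<le> c"
    using ge_one_powr_ge_zero[of 2 "real N * B / (T * W)"] assms(2-4) by (simp add: c_def)
  then have a: "0 \<le> a" "\<rho> * a\<^sup>2 = c"
    using assms(6) by (auto simp: a_def \<rho>_def)
  define E where "E j = {\<omega> \<in> space P. \<forall>i\<in>{1..M}. Re (h i j \<omega>) \<in> {-a<..<a} \<and> Im (h i j \<omega>) \<in> {-a<..<a}}" for j
  have E_sets: "E j \<in> sets P" if "j \<in> {1..N}" for j
    unfolding E_def using that by (rule iid_CN01_fading_device_event_measurable[OF assms(5)]) simp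
  have threshold: "2 powr (real N * B / (T * W)) - 1 \<le> avg_snr Pt W sigma0 * a\<^sup>2"
    using a(2) by (simp add: \<rho>_def c_def)
  have outage_imp_weak_device: "{\<omega> \<in> space P. T < (\<Sum>j\<in>{1..N}. B / single_hop_rate h M W sigma0 Pt j \<omega>)}
                              \<subseteq> (\<Union>j\<in>{1..N}. E j)"
  proof
    fix \<omega> assume "\<omega> \<in> {\<omega> \<in> space P. T < (\<Sum>j\<in>{1..N}. B / single_hop_rate h M W sigma0 Pt j \<omega>)}"
    then have "\<omega> \<in> space P" and outage: "T < (\<Sum>j\<in>{1..N}. B / single_hop_rate h M W sigma0 Pt j \<omega>)"
      by simp_all
    obtain j where "j \<in> {1..N}"
      and "\<forall>i\<in>{1..M}. Re (h i j \<omega>) \<in> {-a<..<a} \<and> Im (h i j \<omega>) \<in> {-a<..<a}"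
      using single_hop_outage_imp_weak_device[OF assms(2-4,6) a(1) threshold outage] ..
    then show "\<omega> \<in> (\<Union>j\<in>{1..N}. E j)"
      using \<open>\<omega> \<in> space P\<close> by (intro UN_I[of j]) (simp_all add: E_def)
  qed
  have "single_hop_outage P h M N B T W sigma0 Pt \<le> prob (\<Union>j\<in>{1..N}. E j)"
    unfolding single_hop_outage_def using outage_imp_weak_device E_sets
    by (intro finite_measure_mono) auto
  also have "\<dots> \<le> (\<Sum>j\<in>{1..N}. prob (E j))"
    using E_sets by (intro finite_measure_subadditive_finite) auto
  also have "\<dots> = (\<Sum>j\<in>{1..N}. measure normal_var_half {-a<..<a} ^ (2 * M))"
    unfolding E_def by (intro sum.cong iid_CN01_fading_prob_device[OF assms(5) _ assms(1)]) auto
  also have "\<dots> \<le> (\<Sum>j\<in>{1..N}. (2 * a / sqrt pi) ^ (2 * M))"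
    using a(1) by (intro sum_mono power_mono measure_normal_var_half_centered_le) auto
  also have "\<dots> = N * (4 * c / (pi * \<rho>)) ^ M"
  proof -
    have "(2 * a / sqrt pi)\<^sup>2 = 4 * c / (pi * \<rho>)"
      using a(2) assms(6) by (auto simp: \<rho>_def power_mult_distrib power_divide field_simps)
    then show ?thesis
      by (simp add: power_mult)
  qed
  finally show ?thesis
    by (simp add: \<rho>_def c_def)
qed

lemma neg_ln_div_ln_tendsto_of_power_bounds:
  fixes p :: "real \<Rightarrow> real"
  assumes "C > 0" "\<forall>\<^sub>F x in at_top. C / x ^ n \<le> p x \<and> p x \<le> D / x ^ n"
  shows "((\<lambda>x. - ln (p x) / ln x) \<longlongrightarrow> real n) at_top"
proof (rule tendsto_sandwich)
  have bounds: "\<forall>\<^sub>F x in at_top. 1 < x \<and> C / x ^ n \<le> p x \<and> p x \<le> D / x ^ n"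
    using assms(2) eventually_gt_at_top[of 1] by eventually_elim auto
  have ln_pow: "ln (K / x ^ n) = ln K - n * ln x" if "0 < K" "1 < x" for K x :: real
    using that by (simp add: ln_div ln_realpow)
  show "\<forall>\<^sub>F x in at_top. real n - ln D / ln x \<le> - ln (p x) / ln x"
    using bounds
  proof eventually_elim
    case (elim x)
    then have x: "1 < x" "0 < p x" "p x \<le> D / x ^ n"
      using assms(1) less_le_trans[of 0 "C / x ^ n" "p x"] by auto
    have "0 < D"
    proof -
      have "0 < D / x ^ n" "0 < x ^ n"
        using x by simp_all
      then show ?thesis
        using x(1) by (simp add: zero_less_divide_iff)
    qed
    have "ln (p x) \<le> ln (D / x ^ n)"
      using x(3,2) by (rule ln_mono)
    also have "\<dots> = ln D - n * ln x"
      using \<open>0 < D\<close> x(1) by (rule ln_pow)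
    finally have "(n * ln x - ln D) / ln x \<le> - ln (p x) / ln x"
      using x(1) by (intro divide_right_mono) auto
    then show ?case
      using x(1) by (simp add: diff_divide_distrib)
  qed
  show "\<forall>\<^sub>F x in at_top. - ln (p x) / ln x \<le> real n - ln C / ln x"
    using bounds
  proof eventually_elim
    case (elim x)
    then have x: "1 < x" "C / x ^ n \<le> p x"
      by auto
    have "ln C - n * ln x = ln (C / x ^ n)"
      using assms(1) x(1) by (rule ln_pow[symmetric])
    also have "\<dots> \<le> ln (p x)"
      using x(2) by (rule ln_mono) (use assms(1) x(1) in simp)
    finally have "- ln (p x) / ln x \<le> (n * ln x - ln C) / ln x"
      using x(1) by (intro divide_right_mono) auto
    then show ?case
      using x(1) by (simp add: diff_divide_distrib)
  qed
  have "((\<lambda>x. real n - K / ln x) \<longlongrightarrow> real n - 0) at_top" for K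
    by (intro tendsto_intros tendsto_divide_0[OF tendsto_const]
        filterlim_at_top_imp_at_infinity[OF ln_at_top])
  then show "((\<lambda>x. real n - ln D / ln x) \<longlongrightarrow> real n) at_top"
      "((\<lambda>x. real n - ln C / ln x) \<longlongrightarrow> real n) at_top"
    by simp_all
qed

theorem proposition2:
  fixes P :: "'w measure" and h :: "nat \<Rightarrow> nat \<Rightarrow> 'w \<Rightarrow> complex"
    and M N :: nat and B T W sigma0 :: real
  assumes "M \<ge> 1" and "N \<ge> 1"
    and "B > 0" and "T > 0" and "W > 0" and "sigma0 > 0"
    and "iid_CN01_fading P h M N"
  shows "((\<lambda>Pt. - ln (single_hop_outage P h M N B T W sigma0 Pt) / ln Pt)
           \<longlongrightarrow> real M) at_top"
proof -
  define c where "c = 2 powr (B / (T * W)) - 1"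
  define c' where "c' = 2 powr (real N * B / (T * W)) - 1"
  have "0 < c"
    using gr_one_powr[of 2 "B / (T * W)"] assms(3-5) by (simp add: c_def)
  show ?thesis
  proof (rule neg_ln_div_ln_tendsto_of_power_bounds)
    show "0 < (exp (-2) * c * W * sigma0 / (2 * pi * M)) ^ M"
      using \<open>0 < c\<close> assms(1,5,6) by simp
    show "\<forall>\<^sub>F Pt in at_top.
            (exp (-2) * c * W * sigma0 / (2 * pi * M)) ^ M / Pt ^ M \<le> single_hop_outage P h M N B T W sigma0 Pt \<and>
            single_hop_outage P h M N B T W sigma0 Pt \<le> N * (4 * c' * W * sigma0 / pi) ^ M / Pt ^ M"
      using eventually_ge_at_top[of "max 1 (c * W * sigma0 / (2 * M))"]
    proof eventually_elim
      case (elim Pt)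
      then have snr: "0 < avg_snr Pt W sigma0" "c \<le> 2 * real M * avg_snr Pt W sigma0"
        using assms(1,5,6) by (auto simp: avg_snr_def field_simps)
      show ?case
        using single_hop_outage_ge[OF assms(1-5,7) snr[unfolded c_def]]
          single_hop_outage_le[OF assms(1,3-5,7) snr(1)] elim assms(5,6)
        by (simp add: avg_snr_def c_def c'_def power_divide field_simps)
    qed
  qed
qed

end
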